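(* Let $A$ be a commutative ring with $1$, let $T\subset A$ be an archimedean semiring containing $\frac1n$ for some integer $n>1$, and let $f\in A$. Assume that for every maximal ideal $\mathfrak m$ of $A$ there exists $s\in A\setminus\mathfrak m$ such that $s\ge0$ on $X_A(T)$ and $sf\in T$. Then $f\in T$.
   Context: A semiring $T\subset A$ is a subset containing $0$ and $1$ and closed under addition and multiplication; it is archimedean if for every $f\in A$ there is $n\in\mathbb{Z}$ with $n+f\in T$. The real spectrum $\mathrm{Sper}(A)$ is the set of pairs $\alpha=(\mathfrak p,\le)$ with $\mathfrak p$ a prime ideal of $A$ and $\le$ an ordering of the residue field of $\mathfrak p$; for $a\in A$, $a\ge_\alpha0$ means the image of $a$ in that residue field is $\ge0$ under $\le$ (similarly $>_\alpha$). $X_A(T)=\{\alpha\in\mathrm{Sper}(A): a\ge_\alpha0 \text{ for all } a\in T\}$. An element $s\in A$ satisfies $s\ge0$ on $X_A(T)$ if $s\ge_\alpha0$ for all $\alpha\in X_A(T)$. *)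

theory Defs
  imports Main
begin

definition is_ideal :: "'a::comm_ring_1 set \<Rightarrow> bool" where
  "is_ideal I \<longleftrightarrow> 0 \<in> I \<and> (\<forall>x\<in>I. \<forall>y\<in>I. x + y \<in> I) \<and> (\<forall>x\<in>I. \<forall>a. a * x \<in> I)"

definition prime_ideal :: "'a::comm_ring_1 set \<Rightarrow> bool" where
  "prime_ideal I \<longleftrightarrow> is_ideal I \<and> I \<noteq> UNIV \<and> (\<forall>a b. a * b \<in> I \<longrightarrow> a \<in> I \<or> b \<in> I)"

definition maximal_ideal :: "'a::comm_ring_1 set \<Rightarrow> bool" where
  "maximal_ideal M \<longleftrightarrow> is_ideal M \<and> M \<noteq> UNIV \<and>
     (\<forall>J. is_ideal J \<and> M \<subseteq> J \<longrightarrow> J = M \<or> J = UNIV)"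

definition is_semiring :: "'a::comm_ring_1 set \<Rightarrow> bool" where
  "is_semiring T \<longleftrightarrow> 0 \<in> T \<and> 1 \<in> T \<and> (\<forall>x\<in>T. \<forall>y\<in>T. x + y \<in> T \<and> x * y \<in> T)"

definition archimedean :: "'a::comm_ring_1 set \<Rightarrow> bool" where
  "archimedean T \<longleftrightarrow> (\<forall>f. \<exists>n::int. of_int n + f \<in> T)"

text \<open>A point alpha = (p, ordering of the residue field of p)
  is encoded by its positive cone P = {a. a >=_alpha 0}, i.e. a prime cone of A:
  P + P in P, P P in P, P union -P = A, and the support P inter -P is a prime ideal
  (the support is p, and the ordering of the residue field is recovered from P).\<close>
definition sper :: "'a::comm_ring_1 set set" where
  "sper = {P. (\<forall>x\<in>P. \<forall>y\<in>P. x + y \<in> P \<and> x * y \<in> P) \<and> P \<union> uminus ` P = UNIV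
             \<and> prime_ideal (P \<inter> uminus ` P)}"

definition nonneg_at :: "'a::comm_ring_1 set \<Rightarrow> 'a \<Rightarrow> bool" where
  "nonneg_at \<alpha> a \<longleftrightarrow> a \<in> \<alpha>"

definition XT :: "'a::comm_ring_1 set \<Rightarrow> 'a set set" where
  "XT T = {\<alpha> \<in> sper. \<forall>a\<in>T. nonneg_at \<alpha> a}"

end

theory Submission
  imports Defs Complex_Main
begin

(* Call the ring homomorphisms phi : A -> R with phi(T) >= 0 the characters of T
  (positive_homs T). Because T is archimedean and contains 1/n, Kadison-Dubois holds:
  if phi(g) > 0 for every character, then g is in T. Otherwise some maximal proper
  T-module M contains -g; it satisfies M union -M = A, so n-adic Dedekind cuts with
  respect to M define a character phi with phi(g) <= 0. Hence s g = 1 + m with s, m in T,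
  and for N with n^N - s in T the map x |-> (m + (n^N - s) x + s r) / n^N keeps T and
  sends g + r to g + r - 1/n^N (r = (R+1)/n^N), which walks g + R down to g.

  The admissible multipliers S (s >= 0 on X_A(T), s f in T) form a T-module lying in
  no maximal ideal. Those x for which some s in S and bound B satisfy p s + q x in S
  whenever phi(p) > B |phi(q)| at all characters form an ideal containing S (there
  Kadison-Dubois gives p + q in T), so 1 belongs to it. Truncated geometric series in
  1 - s/n^N then give p s + q = 1 with phi(p) > B |phi(q)|, hence 1 in S and f in T. *)

section \<open>Characters\<close>

lemma additive_of_int_mult:
  fixes f :: "'a::ring_1 \<Rightarrow> 'b::ring_1"
  assumes "additive f"
  shows "f (of_int k * x) = of_int k * f x"
proof -
  interpret f: additive f by (fact assms)
  have of_nat_mult: "f (of_nat m * x) = of_nat m * f x" for m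
    by (induction m) (simp_all add: f.zero f.add distrib_right)
  show ?thesis
  proof (cases k rule: int_cases)
    case (neg m)
    then have "of_int k * x = - (of_nat (Suc m) * x)"
      by (simp only: of_int_minus of_int_of_nat_eq mult_minus_left)
    then show ?thesis
      using neg by (simp only: f.minus of_nat_mult of_int_minus of_int_of_nat_eq mult_minus_left)
  qed (simp add: of_nat_mult)
qed

locale real_ring_hom = additive \<phi> for \<phi> :: "'a::comm_ring_1 \<Rightarrow> real" +
  assumes one: "\<phi> 1 = 1" and mult: "\<phi> (x * y) = \<phi> x * \<phi> y"
begin

lemma of_int_mult: "\<phi> (of_int k * x) = of_int k * \<phi> x"
  using additive_axioms by (rule additive_of_int_mult)

lemma of_nat: "\<phi> (of_nat k) = of_nat k"
  using of_int_mult[of "int k" 1] by (simp add: one)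

lemma power: "\<phi> (x ^ k) = \<phi> x ^ k"
  by (induction k) (simp_all add: one mult)

end

definition positive_homs :: "'a::comm_ring_1 set \<Rightarrow> ('a \<Rightarrow> real) set" where
  "positive_homs T = {\<phi>. real_ring_hom \<phi> \<and> (\<forall>t\<in>T. 0 \<le> \<phi> t)}"

lemma positive_homsD:
  assumes "\<phi> \<in> positive_homs T"
  shows "real_ring_hom \<phi>" and "t \<in> T \<Longrightarrow> 0 \<le> \<phi> t"
  using assms unfolding positive_homs_def by blast+

lemma positive_hom_abs_le:
  assumes "\<phi> \<in> positive_homs T" and "of_nat N + x \<in> T" and "of_nat N - x \<in> T"
  shows "\<bar>\<phi> x\<bar> \<le> real N"
proof -
  interpret real_ring_hom \<phi> using assms(1) by (rule positive_homsD)
  have "0 \<le> \<phi> (of_nat N + x)" "0 \<le> \<phi> (of_nat N - x)"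
    using positive_homsD(2)[OF assms(1)] assms(2,3) by blast+
  then show ?thesis by (simp add: add diff of_nat)
qed

lemma nonneg_set_mem_XT:
  assumes "\<phi> \<in> positive_homs T"
  shows "{x. 0 \<le> \<phi> x} \<in> XT T"
proof -
  interpret real_ring_hom \<phi> using assms by (rule positive_homsD)
  let ?P = "{x. 0 \<le> \<phi> x}"
  have neg: "x \<in> uminus ` A \<longleftrightarrow> - x \<in> A" for x and A :: "'a set"
    by (metis image_iff minus_minus)
  have support: "?P \<inter> uminus ` ?P = {x. \<phi> x = 0}"
    by (auto simp: neg minus)
  have "prime_ideal {x. \<phi> x = 0}"
    unfolding prime_ideal_def is_ideal_def using one by (auto simp: zero add mult set_eq_iff intro: exI[of _ 1])
  moreover have "?P \<union> uminus ` ?P = UNIV"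
    by (auto simp: neg minus)
  ultimately have "?P \<in> sper"
    unfolding sper_def mem_Collect_eq support by (simp add: add mult)
  then show ?thesis
    using positive_homsD(2)[OF assms] unfolding XT_def nonneg_at_def by simp
qed

section \<open>Ideals and \<open>T\<close>-modules\<close>

lemma chain_Union_closed:
  assumes "subset.chain A C" and "\<And>X. X \<in> C \<Longrightarrow> \<forall>x\<in>X. \<forall>y\<in>X. h x y \<in> X"
    and "x \<in> \<Union>C" and "y \<in> \<Union>C"
  shows "h x y \<in> \<Union>C"
proof -
  obtain X Y where XY: "X \<in> C" "Y \<in> C" "x \<in> X" "y \<in> Y"
    using assms(3,4) by blast
  then have "X \<subseteq> Y \<or> Y \<subseteq> X"
    using assms(1) unfolding subset_chain_def by blast
  then show ?thesis
    using XY assms(2) by blast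
qed

lemma exists_maximal_superset:
  assumes "P X0"
    and chain: "\<And>C. C \<noteq> {} \<Longrightarrow> subset.chain {X. P X} C \<Longrightarrow> P (\<Union>C)"
  shows "\<exists>M. P M \<and> X0 \<subseteq> M \<and> (\<forall>X. P X \<and> M \<subseteq> X \<longrightarrow> X = M)"
proof -
  let ?F = "{X. P X \<and> X0 \<subseteq> X}"
  have "\<Union>C \<in> ?F" if "C \<noteq> {}" and "subset.chain ?F C" for C
  proof -
    have "subset.chain {X. P X} C"
      using that(2) unfolding subset_chain_def by blast
    moreover have "X0 \<subseteq> \<Union>C"
      using that unfolding subset_chain_def by blast
    ultimately show ?thesis
      using chain[OF that(1)] by blast
  qed
  then obtain M where "M \<in> ?F" and "\<forall>X\<in>?F. M \<subseteq> X \<longrightarrow> X = M"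
    using subset_Zorn_nonempty[of ?F] assms(1) by blast
  then show ?thesis by blast
qed

lemma exists_maximal_ideal_superset:
  assumes "is_ideal I" and "1 \<notin> I"
  shows "\<exists>M. maximal_ideal M \<and> I \<subseteq> M"
proof -
  have chain_Union: "is_ideal (\<Union>C) \<and> 1 \<notin> \<Union>C"
    if "C \<noteq> {}" and chain: "subset.chain {J. is_ideal J \<and> 1 \<notin> J} C" for C
  proof -
    have ideals: "is_ideal J" "1 \<notin> J" if "J \<in> C" for J
      using chain that unfolding subset_chain_def by blast+
    have "\<forall>x\<in>J. \<forall>y\<in>J. x + y \<in> J" if "J \<in> C" for J
      using ideals(1)[OF that] unfolding is_ideal_def by blast
    then have "\<forall>x\<in>\<Union>C. \<forall>y\<in>\<Union>C. x + y \<in> \<Union>C"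
      using chain_Union_closed[OF chain] by blast
    moreover have "\<forall>x\<in>\<Union>C. \<forall>a. a * x \<in> \<Union>C"
      using ideals(1) unfolding is_ideal_def by blast
    moreover have "0 \<in> \<Union>C"
      using \<open>C \<noteq> {}\<close> ideals(1) unfolding is_ideal_def by blast
    moreover have "1 \<notin> \<Union>C"
      using ideals(2) by blast
    ultimately show ?thesis
      unfolding is_ideal_def by (intro conjI)
  qed
  obtain M where M: "is_ideal M" "1 \<notin> M" "I \<subseteq> M"
    and max: "\<And>J. is_ideal J \<Longrightarrow> 1 \<notin> J \<Longrightarrow> M \<subseteq> J \<Longrightarrow> J = M"
    using exists_maximal_superset[of "\<lambda>J. is_ideal J \<and> 1 \<notin> J" I, OF _ chain_Union] assms
    by auto
  have "J = M \<or> J = UNIV" if "is_ideal J" "M \<subseteq> J" for J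
  proof (cases "1 \<in> J")
    case True
    then have "x * 1 \<in> J" for x
      using \<open>is_ideal J\<close> unfolding is_ideal_def by blast
    then show ?thesis
      by (simp add: set_eq_iff)
  next
    case False
    then show ?thesis
      using max that by blast
  qed
  then have "maximal_ideal M"
    unfolding maximal_ideal_def using M by blast
  then show ?thesis
    using M by blast
qed

definition is_T_module :: "'a::comm_ring_1 set \<Rightarrow> 'a set \<Rightarrow> bool" where
  "is_T_module T M \<longleftrightarrow> 0 \<in> M \<and> (\<forall>x\<in>M. \<forall>y\<in>M. x + y \<in> M) \<and> (\<forall>t\<in>T. \<forall>x\<in>M. t * x \<in> M)"

lemma is_T_moduleD:
  assumes "is_T_module T M"
  shows "0 \<in> M" and "x \<in> M \<Longrightarrow> y \<in> M \<Longrightarrow> x + y \<in> M" and "t \<in> T \<Longrightarrow> x \<in> M \<Longrightarrow> t * x \<in> M"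
  using assms unfolding is_T_module_def by blast+

lemma is_T_module_Int: "is_T_module T M \<Longrightarrow> is_T_module T N \<Longrightarrow> is_T_module T (M \<inter> N)"
  unfolding is_T_module_def by blast

lemma is_T_module_Inter_XT: "is_T_module T (\<Inter> (XT T))"
proof -
  have "0 \<in> \<alpha>" and "x \<in> \<alpha> \<Longrightarrow> y \<in> \<alpha> \<Longrightarrow> x + y \<in> \<alpha> \<and> x * y \<in> \<alpha>" and "t \<in> T \<Longrightarrow> t \<in> \<alpha>"
    if "\<alpha> \<in> XT T" for \<alpha> x y t
  proof -
    have "\<alpha> \<in> sper" and T: "\<forall>t\<in>T. t \<in> \<alpha>"
      using that unfolding XT_def nonneg_at_def by blast+
    then have "(0::'a) \<in> \<alpha> \<union> uminus ` \<alpha>"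
      unfolding sper_def by blast
    then show "0 \<in> \<alpha>"
      by auto
    show "x \<in> \<alpha> \<Longrightarrow> y \<in> \<alpha> \<Longrightarrow> x + y \<in> \<alpha> \<and> x * y \<in> \<alpha>"
      using \<open>\<alpha> \<in> sper\<close> unfolding sper_def by blast
    show "t \<in> T \<Longrightarrow> t \<in> \<alpha>"
      using T by blast
  qed
  then show ?thesis
    unfolding is_T_module_def by blast
qed

locale archimedean_semiring =
  fixes T :: "'a::comm_ring_1 set"
  assumes semiring: "is_semiring T" and archimedean: "archimedean T"
begin

lemma zero_mem: "0 \<in> T" and one_mem: "1 \<in> T"
  and add_mem: "x \<in> T \<Longrightarrow> y \<in> T \<Longrightarrow> x + y \<in> T"
  and mult_mem: "x \<in> T \<Longrightarrow> y \<in> T \<Longrightarrow> x * y \<in> T"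
  using semiring unfolding is_semiring_def by blast+

lemma of_nat_mem: "of_nat k \<in> T"
  by (induction k) (simp_all add: zero_mem one_mem add_mem)

lemma power_mem: "x \<in> T \<Longrightarrow> x ^ k \<in> T"
  by (induction k) (simp_all add: one_mem mult_mem)

lemma of_nat_bounds: "\<exists>N. of_nat N + x \<in> T \<and> of_nat N - x \<in> T"
proof -
  obtain k l :: int where k: "of_int k + x \<in> T" and l: "of_int l + - x \<in> T"
    using archimedean unfolding archimedean_def by blast
  define N where "N = nat (max 0 (max k l))"
  have "k \<le> int N" "l \<le> int N"
    unfolding N_def by simp_all
  then have "of_nat N + x = of_nat (nat (int N - k)) + (of_int k + x)"
    and "of_nat N - x = of_nat (nat (int N - l)) + (of_int l + - x)"
    by (simp_all add: of_nat_nat)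
  then show ?thesis
    using k l of_nat_mem add_mem by metis
qed

lemma is_T_module_T: "is_T_module T T"
  unfolding is_T_module_def using zero_mem add_mem mult_mem by blast

lemma is_T_module_extend:
  assumes "is_T_module T M"
  shows "is_T_module T {m + s * b | m s. m \<in> M \<and> s \<in> T}" (is "is_T_module T ?N")
  unfolding is_T_module_def
proof (intro conjI ballI)
  show "0 \<in> ?N"
    using is_T_moduleD(1)[OF assms] zero_mem by force
next
  fix x y assume "x \<in> ?N" "y \<in> ?N"
  then obtain m s m' s' where "m \<in> M" "s \<in> T" "m' \<in> M" "s' \<in> T"
    and "x = m + s * b" "y = m' + s' * b"
    by blast
  moreover from this have "x + y = (m + m') + (s + s') * b"
    by (simp add: algebra_simps)
  ultimately show "x + y \<in> ?N"
    using is_T_moduleD(2)[OF assms] add_mem by blast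
next
  fix t x assume "t \<in> T" "x \<in> ?N"
  then obtain m s where "m \<in> M" "s \<in> T" and "x = m + s * b"
    by blast
  moreover from this have "t * x = t * m + (t * s) * b"
    by (simp add: algebra_simps)
  ultimately show "t * x \<in> ?N"
    using is_T_moduleD(3)[OF assms] mult_mem \<open>t \<in> T\<close> by blast
qed

lemma is_T_module_multipliers: "is_T_module T {s. s * f \<in> T}"
  unfolding is_T_module_def
  by (simp add: zero_mem add_mem mult_mem distrib_right mult.assoc)

lemma maximal_T_module_absorbs:
  assumes M: "is_T_module T M" and max: "\<And>X. is_T_module T X \<Longrightarrow> -1 \<notin> X \<Longrightarrow> M \<subseteq> X \<Longrightarrow> X = M"
    and "b \<notin> M"
  shows "\<exists>m\<in>M. \<exists>s\<in>T. -1 = m + s * b"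
proof (rule ccontr)
  let ?N = "{m + s * b | m s. m \<in> M \<and> s \<in> T}"
  assume "\<not> ?thesis"
  then have "-1 \<notin> ?N"
    by blast
  moreover have "M \<subseteq> ?N"
  proof
    fix m assume "m \<in> M"
    have "m = m + 0 * b"
      by simp
    then show "m \<in> ?N"
      using \<open>m \<in> M\<close> zero_mem by blast
  qed
  moreover have "b = 0 + 1 * b"
    by simp
  then have "b \<in> ?N"
    using is_T_moduleD(1)[OF M] one_mem by blast
  ultimately show False
    using max[OF is_T_module_extend[OF M]] \<open>b \<notin> M\<close> by blast
qed

lemma maximal_T_module_total:
  assumes M: "is_T_module T M" "1 \<in> M" "-1 \<notin> M"
    and max: "\<And>X. is_T_module T X \<Longrightarrow> -1 \<notin> X \<Longrightarrow> M \<subseteq> X \<Longrightarrow> X = M"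
  shows "a \<in> M \<or> -a \<in> M"
proof (rule ccontr)
  assume "\<not> (a \<in> M \<or> -a \<in> M)"
  then have "a \<notin> M" and "-a \<notin> M"
    by simp_all
  obtain m1 s1 where m1: "m1 \<in> M" "s1 \<in> T" "-1 = m1 + s1 * a"
    using maximal_T_module_absorbs[OF M(1) max \<open>a \<notin> M\<close>] by blast
  obtain m2 s2 where m2: "m2 \<in> M" "s2 \<in> T" "-1 = m2 + s2 * (-a)"
    using maximal_T_module_absorbs[OF M(1) max \<open>-a \<notin> M\<close>] by blast
  have T_subset: "T \<subseteq> M"
    using is_T_moduleD(3)[OF M(1) _ M(2)] by auto
  have "s2 * (m1 + s1 * a) + s1 * (m2 + s2 * (-a)) = s2 * m1 + s1 * m2"
    by (simp add: algebra_simps)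
  then have "- s1 = s2 * m1 + s1 * m2 + s2"
    unfolding m1(3)[symmetric] m2(3)[symmetric] by (simp add: algebra_simps)
  then have "- s1 \<in> M"
    using m1 m2 T_subset is_T_moduleD(2,3)[OF M(1)] by (metis subsetD)
  obtain N where N: "of_nat N + a \<in> T"
    using of_nat_bounds by blast
  have "s1 * a = (of_nat N + a) * s1 + of_nat N * (- s1)"
    by (simp add: algebra_simps)
  also have "\<dots> \<in> M"
    using \<open>- s1 \<in> M\<close> m1(2) N T_subset of_nat_mem is_T_moduleD(2,3)[OF M(1)] by blast
  finally have "-1 \<in> M"
    using m1 is_T_moduleD(2)[OF M(1)] by metis
  with M(3) show False
    by blast
qed

lemma exists_total_T_module:
  assumes "is_T_module T M0" and "1 \<in> M0" and "-1 \<notin> M0"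
  shows "\<exists>M. M0 \<subseteq> M \<and> is_T_module T M \<and> -1 \<notin> M \<and> (\<forall>a. a \<in> M \<or> -a \<in> M)"
proof -
  have chain_Union: "is_T_module T (\<Union>C) \<and> -1 \<notin> \<Union>C"
    if "C \<noteq> {}" and chain: "subset.chain {X. is_T_module T X \<and> -1 \<notin> X} C" for C
  proof -
    have modules: "is_T_module T X" "-1 \<notin> X" if "X \<in> C" for X
      using chain that unfolding subset_chain_def by blast+
    have "\<forall>x\<in>X. \<forall>y\<in>X. x + y \<in> X" if "X \<in> C" for X
      using is_T_moduleD(2)[OF modules(1)[OF that]] by blast
    then have "\<forall>x\<in>\<Union>C. \<forall>y\<in>\<Union>C. x + y \<in> \<Union>C"
      using chain_Union_closed[OF chain] by blast
    moreover have "\<forall>t\<in>T. \<forall>x\<in>\<Union>C. t * x \<in> \<Union>C"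
      using modules(1) is_T_moduleD(3) by blast
    moreover have "0 \<in> \<Union>C"
      using \<open>C \<noteq> {}\<close> modules(1) is_T_moduleD(1) by blast
    moreover have "-1 \<notin> \<Union>C"
      using modules(2) by blast
    ultimately show ?thesis
      unfolding is_T_module_def by (intro conjI)
  qed
  obtain M where M: "is_T_module T M" "-1 \<notin> M" "M0 \<subseteq> M"
    and max: "\<And>X. is_T_module T X \<Longrightarrow> -1 \<notin> X \<Longrightarrow> M \<subseteq> X \<Longrightarrow> X = M"
    using exists_maximal_superset[of "\<lambda>X. is_T_module T X \<and> -1 \<notin> X" M0, OF _ chain_Union] assms
    by auto
  have "1 \<in> M"
    using assms(2) M(3) by blast
  with M max show ?thesis
    using maximal_T_module_total by blast
qed

end

section \<open>Characters from total \<open>T\<close>-modules\<close>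

locale archimedean_semiring_frac = archimedean_semiring +
  fixes n :: nat and u :: "'a::comm_ring_1"
  assumes n_gt_1: "n > 1" and u_mem: "u \<in> T" and of_nat_n_mult_u: "of_nat n * u = 1"
begin

lemma of_nat_n_power_mult_u_power: "of_nat n ^ j * u ^ j = 1"
  by (simp add: power_mult_distrib[symmetric] of_nat_n_mult_u)

lemma u_power_rescale: "of_int k * u ^ j = of_int (k * int n ^ i) * u ^ (j + i)"
proof -
  have "of_int (k * int n ^ i) * u ^ (j + i) = of_int k * u ^ j * (of_nat n ^ i * u ^ i)"
    by (simp add: power_add algebra_simps)
  then show ?thesis
    by (simp add: of_nat_n_power_mult_u_power)
qed

lemma n_power_pos: "0 < real n ^ j"
  using n_gt_1 by simp

lemma le_n_power: "N \<le> n ^ N"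
  using n_gt_1 by (simp add: self_le_ge2_pow)

lemma additive_u_power:
  fixes \<psi> :: "'a \<Rightarrow> real"
  assumes "additive \<psi>" and "\<psi> 1 = 1"
  shows "\<psi> (u ^ j) = 1 / real n ^ j"
proof -
  have "\<psi> (of_nat n ^ j * u ^ j) = real n ^ j * \<psi> (u ^ j)"
    using additive_of_int_mult[OF assms(1), of "int n ^ j"] by simp
  then have "real n ^ j * \<psi> (u ^ j) = 1"
    using of_nat_n_power_mult_u_power assms(2) by simp
  then show ?thesis
    using n_power_pos[of j] by (simp add: field_simps)
qed

end

lemma int_exists_boundary:
  fixes P :: "int \<Rightarrow> bool"
  assumes "l \<le> k" and "\<not> P l" and "P k"
  shows "\<exists>i. P i \<and> \<not> P (i - 1)"
  using assms
proof (induction k rule: int_ge_induct)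
  case (step i)
  then show ?case
    by (cases "P i") force+
qed simp

locale total_T_module = archimedean_semiring_frac +
  fixes M :: "'a::comm_ring_1 set"
  assumes T_module: "is_T_module T M" and minus_one_not_mem: "-1 \<notin> M"
    and total: "a \<in> M \<or> -a \<in> M"
begin

lemma add_mem_M: "x \<in> M \<Longrightarrow> y \<in> M \<Longrightarrow> x + y \<in> M"
  by (fact is_T_moduleD(2)[OF T_module])

lemma mult_mem_M: "t \<in> T \<Longrightarrow> x \<in> M \<Longrightarrow> t * x \<in> M"
  by (fact is_T_moduleD(3)[OF T_module])

lemma T_subset_M: "T \<subseteq> M"
proof
  fix t assume "t \<in> T"
  have "1 \<in> M"
    using total[of 1] minus_one_not_mem by blast
  then show "t \<in> M"
    using mult_mem_M[OF \<open>t \<in> T\<close>] by (metis mult.right_neutral)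
qed

lemma nonneg_if_mult_u_power_mem:
  assumes "of_int k * u ^ j \<in> M"
  shows "0 \<le> k"
proof (rule ccontr)
  assume "\<not> 0 \<le> k"
  then have "of_int k * u ^ j + of_nat (nat (- k - 1)) * u ^ j = - (u ^ j)"
    by (simp add: of_nat_nat algebra_simps)
  moreover have "of_nat (nat (- k - 1)) * u ^ j \<in> M"
    using T_subset_M mult_mem of_nat_mem power_mem u_mem by blast
  ultimately have "- (u ^ j) \<in> M"
    using add_mem_M[OF assms] by metis
  then have "of_nat n ^ j * - (u ^ j) \<in> M"
    using mult_mem_M of_nat_mem by (metis of_nat_power)
  then show False
    using minus_one_not_mem of_nat_n_power_mult_u_power by simp
qed

lemma mult_u_power_lower_bound:
  assumes "of_int k * u ^ j - x \<in> M" and "of_nat N + x \<in> M"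
  shows "- (int N * int n ^ j) \<le> k"
proof -
  have "(of_int k * u ^ j - x) + (of_nat N + x) = of_int k * u ^ j + of_nat N * (of_nat n ^ j * u ^ j)"
    by (simp add: of_nat_n_power_mult_u_power)
  also have "\<dots> = of_int (k + int N * int n ^ j) * u ^ j"
    by (simp add: algebra_simps)
  finally have "of_int (k + int N * int n ^ j) * u ^ j \<in> M"
    using add_mem_M[OF assms] by metis
  then show ?thesis
    using nonneg_if_mult_u_power_mem by fastforce
qed

(* The character is the Dedekind cut of the n-adic rationals k / n^j: phi x is the infimum
  of those lying above x in the preorder defined by M. *)
definition upper :: "'a \<Rightarrow> real set" where
  "upper x = {of_int k / real n ^ j | k j. of_int k * u ^ j - x \<in> M}"

definition phi :: "'a \<Rightarrow> real" where
  "phi x = Inf (upper x)"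

lemma upperI: "of_int k * u ^ j - x \<in> M \<Longrightarrow> of_int k / real n ^ j \<in> upper x"
  unfolding upper_def by blast

lemma upperE:
  assumes "r \<in> upper x"
  obtains k j where "r = of_int k / real n ^ j" and "of_int k * u ^ j - x \<in> M"
  using assms unfolding upper_def by blast

lemma upper_nonempty: "upper x \<noteq> {}"
proof -
  obtain N where "of_nat N - x \<in> T"
    using of_nat_bounds by blast
  then have "of_int (int N) * u ^ 0 - x \<in> M"
    using T_subset_M by auto
  then show ?thesis
    using upperI by blast
qed

lemma bdd_below_upper: "bdd_below (upper x)"
proof -
  obtain N where "of_nat N + x \<in> T"
    using of_nat_bounds by blast
  then have N: "of_nat N + x \<in> M"
    using T_subset_M by blast
  have "- real N \<le> r" if "r \<in> upper x" for r
  proof -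
    obtain k j where r: "r = of_int k / real n ^ j" and k: "of_int k * u ^ j - x \<in> M"
      using \<open>r \<in> upper x\<close> by (rule upperE)
    have "real_of_int (- (int N * int n ^ j)) \<le> real_of_int k"
      using mult_u_power_lower_bound[OF k N] by (simp only: of_int_le_iff)
    then show ?thesis
      unfolding r using n_power_pos[of j] by (simp add: field_simps)
  qed
  then show ?thesis
    by (rule bdd_belowI)
qed

lemma phi_le: "r \<in> upper x \<Longrightarrow> phi x \<le> r"
  unfolding phi_def by (rule cInf_lower[OF _ bdd_below_upper])

lemma le_phi: "(\<And>r. r \<in> upper x \<Longrightarrow> z \<le> r) \<Longrightarrow> z \<le> phi x"
  unfolding phi_def by (rule cInf_greatest[OF upper_nonempty])

lemma phi_nonneg:
  assumes "x \<in> M"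
  shows "0 \<le> phi x"
proof (rule le_phi)
  fix r assume "r \<in> upper x"
  then obtain k j where r: "r = of_int k / real n ^ j" and "of_int k * u ^ j - x \<in> M"
    by (rule upperE)
  then have "of_int k * u ^ j \<in> M"
    using add_mem_M[OF _ assms] by fastforce
  then show "0 \<le> r"
    unfolding r using nonneg_if_mult_u_power_mem n_power_pos[of j] by simp
qed

lemma upper_add:
  assumes "r \<in> upper x" and "r' \<in> upper y"
  shows "r + r' \<in> upper (x + y)"
proof -
  obtain k j where r: "r = of_int k / real n ^ j" and k: "of_int k * u ^ j - x \<in> M"
    using assms(1) by (rule upperE)
  obtain k' j' where r': "r' = of_int k' / real n ^ j'" and k': "of_int k' * u ^ j' - y \<in> M"
    using assms(2) by (rule upperE)
  define K where "K = k * int n ^ j' + k' * int n ^ j"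
  have "of_int K * u ^ (j + j') = of_int k * u ^ j + of_int k' * u ^ j'"
    unfolding K_def u_power_rescale[of k j j'] u_power_rescale[of k' j' j]
    by (simp add: algebra_simps)
  then have "of_int K * u ^ (j + j') - (x + y) = (of_int k * u ^ j - x) + (of_int k' * u ^ j' - y)"
    by simp
  then have "of_int K / real n ^ (j + j') \<in> upper (x + y)"
    using add_mem_M[OF k k'] upperI by metis
  moreover have "r + r' = of_int K / real n ^ (j + j')"
    unfolding r r' K_def using n_power_pos[of j] n_power_pos[of j'] by (simp add: field_simps power_add)
  ultimately show ?thesis
    by simp
qed

lemma phi_add_le: "phi (x + y) \<le> phi x + phi y"
proof -
  have "phi (x + y) - r' \<le> phi x" if "r' \<in> upper y" for r'
  proof (rule le_phi)
    fix r assume "r \<in> upper x"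
    then show "phi (x + y) - r' \<le> r"
      using phi_le[OF upper_add] that by fastforce
  qed
  then have "phi (x + y) - phi x \<le> phi y"
    by (intro le_phi) (simp add: algebra_simps)
  then show ?thesis
    by simp
qed

lemma exists_adjacent_upper_lower:
  "\<exists>k. of_int k * u ^ j - x \<in> M \<and> x - of_int (k - 1) * u ^ j \<in> M"
proof -
  obtain N where N: "of_nat N + x \<in> M" "of_nat N - x \<in> M"
    using of_nat_bounds T_subset_M by blast
  define P where "P k \<longleftrightarrow> of_int k * u ^ j - x \<in> M" for k
  define K where "K = int N * int n ^ j"
  have "0 \<le> K"
    unfolding K_def by simp
  have "of_int K * u ^ j - x = of_nat N - x"
    using of_nat_n_power_mult_u_power[of j] unfolding K_def by (simp add: algebra_simps)
  then have "P K"
    unfolding P_def using N(2) by simp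
  moreover have "\<not> P (- K - 1)"
  proof
    assume "P (- K - 1)"
    then have "- K \<le> - K - 1"
      unfolding P_def K_def by (rule mult_u_power_lower_bound[OF _ N(1)])
    then show False
      by simp
  qed
  moreover have "- K - 1 \<le> K"
    using \<open>0 \<le> K\<close> by simp
  ultimately obtain k where "P k" and "\<not> P (k - 1)"
    using int_exists_boundary by blast
  then have "- (of_int (k - 1) * u ^ j - x) \<in> M"
    unfolding P_def using total by blast
  then show ?thesis
    using \<open>P k\<close> unfolding P_def by auto
qed

lemma phi_minus: "phi (- x) = - phi x"
proof -
  have lower: "0 \<le> phi x + phi (- x)"
    using phi_add_le[of x "- x"] phi_nonneg[OF is_T_moduleD(1)[OF T_module]] by simp
  have upper: "phi x + phi (- x) \<le> 1 / real n ^ j" for j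
  proof -
    obtain k where k: "of_int k * u ^ j - x \<in> M" "x - of_int (k - 1) * u ^ j \<in> M"
      using exists_adjacent_upper_lower by blast
    have "of_int (1 - k) * u ^ j - (- x) = x - of_int (k - 1) * u ^ j"
      by (simp add: algebra_simps)
    then have "of_int (1 - k) / real n ^ j \<in> upper (- x)"
      using k(2) upperI by metis
    moreover have "of_int k / real n ^ j \<in> upper x"
      using k(1) by (rule upperI)
    ultimately have "phi x + phi (- x) \<le> of_int k / real n ^ j + of_int (1 - k) / real n ^ j"
      by (intro add_mono phi_le)
    also have "\<dots> = 1 / real n ^ j"
      by (simp add: add_divide_distrib[symmetric])
    finally show ?thesis .
  qed
  have "phi x + phi (- x) \<le> 0"
  proof (rule ccontr)
    assume "\<not> ?thesis"
    then have "0 < phi x + phi (- x)"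
      by simp
    moreover have "1 / real n < 1"
      using n_gt_1 by simp
    ultimately obtain j where "(1 / real n) ^ j < phi x + phi (- x)"
      using real_arch_pow_inv by blast
    then show False
      using upper[of j] by (simp add: power_one_over)
  qed
  with lower show ?thesis
    by simp
qed

lemma phi_add: "phi (x + y) = phi x + phi y"
proof (rule antisym)
  have "- phi (x + y) \<le> - phi x + - phi y"
    using phi_add_le[of "- x" "- y"] by (metis minus_add_distrib phi_minus)
  then show "phi x + phi y \<le> phi (x + y)"
    by simp
qed (fact phi_add_le)

lemma additive_phi: "additive phi"
  by unfold_locales (fact phi_add)

lemma phi_one: "phi 1 = 1"
proof -
  have "phi 1 \<le> 1" and "phi (- 1) \<le> - 1"
    using phi_le upperI[of 1 0 1] upperI[of "- 1" 0 "- 1"] is_T_moduleD(1)[OF T_module] by auto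
  then show ?thesis
    using phi_minus[of 1] by simp
qed

lemma additive_eq_phi:
  fixes \<psi> :: "'a \<Rightarrow> real"
  assumes "additive \<psi>" and "\<psi> 1 = 1" and nonneg: "\<And>x. x \<in> M \<Longrightarrow> 0 \<le> \<psi> x"
  shows "\<psi> x = phi x"
proof -
  interpret \<psi>: additive \<psi> by (fact assms(1))
  have le: "\<psi> y \<le> phi y" for y
  proof (rule le_phi)
    fix r assume "r \<in> upper y"
    then obtain k j where r: "r = of_int k / real n ^ j" and mem: "of_int k * u ^ j - y \<in> M"
      by (rule upperE)
    have "0 \<le> \<psi> (of_int k * u ^ j - y)"
      using mem by (rule nonneg)
    also have "\<dots> = r - \<psi> y"
      unfolding r \<psi>.diff additive_of_int_mult[OF assms(1)] additive_u_power[OF assms(1,2)] by simp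
    finally show "\<psi> y \<le> r"
      by simp
  qed
  from le[of "- x"] have "phi x \<le> \<psi> x"
    by (simp add: \<psi>.minus phi_minus)
  with le[of x] show ?thesis
    by simp
qed

lemma phi_mult_mem:
  assumes "t \<in> T"
  shows "phi (t * x) = phi t * phi x"
proof -
  define \<psi> where "\<psi> y = phi (t * y)" for y
  have "additive \<psi>"
    by unfold_locales (simp add: \<psi>_def distrib_left phi_add)
  have \<psi>_nonneg: "0 \<le> \<psi> y" if "y \<in> M" for y
    unfolding \<psi>_def using mult_mem_M[OF assms that] by (rule phi_nonneg)
  show ?thesis
  proof (cases "phi t = 0")
    case True
    obtain N where "of_nat N + x \<in> T" "of_nat N - x \<in> T"
      using of_nat_bounds by blast
    then have "0 \<le> \<psi> (of_nat N + x)" "0 \<le> \<psi> (of_nat N - x)"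
      using \<psi>_nonneg T_subset_M by blast+
    moreover have "\<psi> (of_nat N) = 0"
      using additive_of_int_mult[OF \<open>additive \<psi>\<close>, of "int N" 1] True by (simp add: \<psi>_def)
    ultimately have "\<psi> x = 0"
      using additive.add[OF \<open>additive \<psi>\<close>] additive.diff[OF \<open>additive \<psi>\<close>] by fastforce
    then show ?thesis
      using True by (simp add: \<psi>_def)
  next
    case False
    then have pos: "0 < phi t"
      using phi_nonneg T_subset_M assms by force
    have "additive (\<lambda>y. \<psi> y / phi t)"
      by unfold_locales (simp add: additive.add[OF \<open>additive \<psi>\<close>] add_divide_distrib)
    then have "\<psi> x / phi t = phi x"
      using additive_eq_phi[of "\<lambda>y. \<psi> y / phi t"] \<psi>_nonneg pos by (simp add: \<psi>_def)
    then show ?thesis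
      using pos by (simp add: \<psi>_def field_simps)
  qed
qed

lemma phi_mult: "phi (x * y) = phi x * phi y"
proof -
  obtain N where N: "of_nat N + x \<in> T"
    using of_nat_bounds by blast
  have of_nat_mult: "phi (of_nat N * z) = real N * phi z" for z
    using additive_of_int_mult[OF additive_phi, of "int N" z] by simp
  have "real N * phi y + phi (x * y) = phi ((of_nat N + x) * y)"
    by (simp add: distrib_right phi_add of_nat_mult)
  also have "\<dots> = (real N + phi x) * phi y"
    using phi_mult_mem[OF N] of_nat_mult[of 1] by (simp add: phi_add phi_one)
  finally show ?thesis
    by (simp add: algebra_simps)
qed

lemma phi_mem_positive_homs: "phi \<in> positive_homs T"
proof -
  interpret additive phi by (fact additive_phi)
  have "real_ring_hom phi"
    by unfold_locales (simp_all add: phi_one phi_mult)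
  then show ?thesis
    unfolding positive_homs_def using phi_nonneg T_subset_M by blast
qed

end

section \<open>The Kadison--Dubois representation theorem\<close>

context archimedean_semiring_frac
begin

lemma exists_mult_eq_one_plus:
  assumes pos: "\<forall>\<phi>\<in>positive_homs T. 0 < \<phi> g"
  shows "\<exists>s\<in>T. \<exists>m\<in>T. s * g = 1 + m"
proof (rule ccontr)
  assume none: "\<not> ?thesis"
  let ?M0 = "{m + s * (- g) | m s. m \<in> T \<and> s \<in> T}"
  have M0: "is_T_module T ?M0"
    by (rule is_T_module_extend[OF is_T_module_T])
  have "1 = 1 + 0 * (- g)" and "- g = 0 + 1 * (- g)"
    by simp_all
  then have one: "1 \<in> ?M0" and minus_g: "- g \<in> ?M0"
    using zero_mem one_mem by blast+
  have minus_one: "-1 \<notin> ?M0"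
  proof
    assume "-1 \<in> ?M0"
    then obtain m s where "m \<in> T" "s \<in> T" "-1 = m + s * (- g)"
      by blast
    then have "s \<in> T" "m \<in> T" "s * g = 1 + m"
      by (simp_all add: algebra_simps)
    then show False
      using none by blast
  qed
  obtain M where "?M0 \<subseteq> M" and M: "is_T_module T M" "-1 \<notin> M" "\<forall>a. a \<in> M \<or> -a \<in> M"
    using exists_total_T_module[OF M0 one minus_one] by blast
  with minus_g have "- g \<in> M"
    by blast
  interpret total_T_module T n u M
    using M by (intro total_T_module.intro archimedean_semiring_frac_axioms total_T_module_axioms.intro) blast+
  have "0 < phi g"
    using pos phi_mem_positive_homs by blast
  moreover have "0 \<le> phi (- g)"
    using \<open>- g \<in> M\<close> by (rule phi_nonneg)
  ultimately show False
    by (simp add: phi_minus)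
qed

lemma mem_if_mult_eq_one_plus:
  assumes "s \<in> T" and "m \<in> T" and "s * g = 1 + m"
  shows "g \<in> T"
proof -
  obtain N where N: "of_nat N - s \<in> T"
    using of_nat_bounds by blast
  define e where "e = u ^ N"
  have "of_nat n ^ N - s = of_nat (n ^ N - N) + (of_nat N - s)"
    using le_n_power by (simp add: of_nat_diff)
  then have n_power_minus_s: "of_nat n ^ N - s \<in> T"
    using N of_nat_mem add_mem by metis
  have step: "g + of_nat R * e \<in> T" if "g + of_nat (Suc R) * e \<in> T" for R
  proof -
    define r where "r = of_nat (Suc R) * e"
    have r: "r \<in> T"
      unfolding r_def e_def using of_nat_mem power_mem u_mem mult_mem by blast
    have "e * (m + (of_nat n ^ N - s) * (g + r) + s * r) = (of_nat n ^ N * e) * (g + r) - e * (s * g - m)"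
      by (simp add: algebra_simps)
    also have "\<dots> = g + of_nat R * e"
      unfolding assms(3) e_def of_nat_n_power_mult_u_power r_def by (simp add: algebra_simps)
    moreover have "g + r \<in> T"
      using that unfolding r_def .
    then have "e * (m + (of_nat n ^ N - s) * (g + r) + s * r) \<in> T"
      unfolding e_def
      by (intro mult_mem[OF power_mem[OF u_mem]] add_mem[OF add_mem[OF assms(2)]]
          mult_mem[OF n_power_minus_s] mult_mem[OF assms(1) r])
    ultimately show ?thesis
      by simp
  qed
  have descend: "g + of_nat R * e \<in> T \<Longrightarrow> g \<in> T" for R
    by (induction R) (simp_all add: step)
  obtain R where R: "of_nat R + g \<in> T"
    using of_nat_bounds by blast
  have "of_nat R + g = g + of_nat (R * n ^ N) * e"
    using of_nat_n_power_mult_u_power[of N] unfolding e_def by (simp add: algebra_simps)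
  then have "g + of_nat (R * n ^ N) * e \<in> T"
    using R by (simp only:)
  then show ?thesis
    by (rule descend)
qed

theorem mem_if_positive:
  assumes "\<forall>\<phi>\<in>positive_homs T. 0 < \<phi> g"
  shows "g \<in> T"
  using exists_mult_eq_one_plus[OF assms] mem_if_mult_eq_one_plus by blast

end

section \<open>The local-global principle\<close>

definition dominates :: "'a::comm_ring_1 set \<Rightarrow> nat \<Rightarrow> 'a \<Rightarrow> 'a \<Rightarrow> bool" where
  "dominates T B p q \<longleftrightarrow> (\<forall>\<phi>\<in>positive_homs T. real B * \<bar>\<phi> q\<bar> < \<phi> p)"

lemma dominates_mono:
  assumes "B \<le> B'" and "dominates T B' p q"
  shows "dominates T B p q"
proof -
  have "real B * \<bar>\<phi> q\<bar> \<le> real B' * \<bar>\<phi> q\<bar>" for \<phi> :: "'a \<Rightarrow> real"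
    using assms(1) by (simp add: mult_right_mono)
  with assms(2) show ?thesis
    unfolding dominates_def by (meson order.strict_trans1)
qed

lemma sum_power_ge:
  fixes \<gamma> :: real
  assumes "0 \<le> \<gamma>" and "\<gamma> \<le> 1"
  shows "1 + real k * \<gamma> ^ Suc k \<le> (\<Sum>i<Suc k. \<gamma> ^ i)"
proof (induction k)
  case (Suc k)
  have "\<gamma> ^ Suc (Suc k) \<le> \<gamma> ^ Suc k"
    using assms by (simp add: mult_left_le_one_le)
  then have "real k * \<gamma> ^ Suc (Suc k) \<le> real k * \<gamma> ^ Suc k"
    by (rule mult_left_mono) simp
  with \<open>\<gamma> ^ Suc (Suc k) \<le> \<gamma> ^ Suc k\<close>
  have "1 + real (Suc k) * \<gamma> ^ Suc (Suc k) \<le> 1 + real k * \<gamma> ^ Suc k + \<gamma> ^ Suc k"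
    by (simp add: algebra_simps)
  also have "\<dots> \<le> (\<Sum>i<Suc (Suc k). \<gamma> ^ i)"
    using Suc.IH by simp
  finally show ?case .
qed simp

context archimedean_semiring_frac
begin

(* p and q come from the geometric series of g = 1 - s / n^N, which lies in [0, 1] at every
  character once n^N bounds s. *)
lemma exists_dominant_combination:
  assumes nonneg: "\<forall>\<phi>\<in>positive_homs T. 0 \<le> \<phi> s"
  shows "\<exists>p q. p * s + q = 1 \<and> dominates T B p q"
proof -
  obtain N where N: "of_nat N + s \<in> T" "of_nat N - s \<in> T"
    using of_nat_bounds by blast
  define c where "c = u ^ N"
  define g where "g = 1 - c * s"
  define K where "K = B * n ^ N"
  define p where "p = c * (\<Sum>i<Suc K. g ^ i)"
  define q where "q = g ^ Suc K"
  have "p * s = (1 - g) * (\<Sum>i<Suc K. g ^ i)"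
    unfolding p_def g_def by (simp add: algebra_simps)
  also have "\<dots> = 1 - q"
    unfolding q_def by (rule one_diff_power_eq[symmetric])
  finally have "p * s + q = 1"
    by simp
  moreover have "real B * \<bar>\<phi> q\<bar> < \<phi> p" if \<phi>: "\<phi> \<in> positive_homs T" for \<phi>
  proof -
    interpret h: real_ring_hom \<phi>
      using \<phi> by (rule positive_homsD)
    define d where "d = real n ^ N"
    have d_pos: "0 < d"
      unfolding d_def by (rule n_power_pos)
    have "\<phi> s \<le> real N"
      using positive_hom_abs_le[OF \<phi> N] by simp
    also have "real N \<le> d"
      unfolding d_def using le_n_power by (metis of_nat_le_iff of_nat_power)
    finally have "\<phi> s \<le> d" .
    have "\<phi> c = 1 / d"
      unfolding c_def d_def by (rule additive_u_power[OF h.additive_axioms h.one])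
    define \<gamma> where "\<gamma> = \<phi> g"
    have \<gamma>: "\<gamma> = 1 - \<phi> s / d"
      unfolding \<gamma>_def g_def using \<open>\<phi> c = 1 / d\<close> by (simp add: h.diff h.mult h.one)
    have "0 \<le> \<gamma>" and "\<gamma> \<le> 1"
      unfolding \<gamma> using \<open>\<phi> s \<le> d\<close> d_pos nonneg \<phi> by simp_all
    have "\<phi> q = \<gamma> ^ Suc K"
      unfolding q_def \<gamma>_def by (rule h.power)
    have "\<phi> p = (\<Sum>i<Suc K. \<gamma> ^ i) / d"
      unfolding p_def \<gamma>_def h.mult h.sum h.power \<open>\<phi> c = 1 / d\<close> by simp
    also have "\<dots> \<ge> (1 + real K * \<gamma> ^ Suc K) / d"
      using sum_power_ge[OF \<open>0 \<le> \<gamma>\<close> \<open>\<gamma> \<le> 1\<close>] d_pos by (simp add: divide_right_mono)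
    also have "(1 + real K * \<gamma> ^ Suc K) / d = 1 / d + real B * \<gamma> ^ Suc K"
      unfolding K_def d_def using n_power_pos[of N] by (simp add: field_simps)
    finally have "1 / d + real B * \<gamma> ^ Suc K \<le> \<phi> p" .
    moreover have "0 < 1 / d"
      using d_pos by simp
    moreover have "\<bar>\<phi> q\<bar> = \<gamma> ^ Suc K"
      using \<open>\<phi> q = \<gamma> ^ Suc K\<close> \<open>0 \<le> \<gamma>\<close> by simp
    ultimately show ?thesis
      by (simp only:)
  qed
  ultimately show ?thesis
    unfolding dominates_def by blast
qed

definition absorbed :: "'a set \<Rightarrow> 'a set" where
  "absorbed S = {x. \<exists>s\<in>S. \<exists>B. \<forall>p q. dominates T B p q \<longrightarrow> p * s + q * x \<in> S}"

(* This is where Kadison-Dubois enters: if p dominates q, then p + q is in T. *)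
lemma subset_absorbed:
  assumes S: "is_T_module T S"
  shows "S \<subseteq> absorbed S"
proof
  fix s assume "s \<in> S"
  have "p * s + q * s \<in> S" if dom: "dominates T 1 p q" for p q
  proof -
    have "p + q \<in> T"
    proof (rule mem_if_positive, intro ballI)
      fix \<phi> assume \<phi>: "\<phi> \<in> positive_homs T"
      interpret h: real_ring_hom \<phi>
        using \<phi> by (rule positive_homsD)
      show "0 < \<phi> (p + q)"
        using dom \<phi> unfolding dominates_def by (auto simp: h.add)
    qed
    then have "(p + q) * s \<in> S"
      using \<open>s \<in> S\<close> by (rule is_T_moduleD(3)[OF S])
    then show ?thesis
      by (simp add: distrib_right)
  qed
  then show "s \<in> absorbed S"
    unfolding absorbed_def using \<open>s \<in> S\<close> by blast
qed

lemma absorbed_add: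
  assumes S: "is_T_module T S" and "x \<in> absorbed S" and "y \<in> absorbed S"
  shows "x + y \<in> absorbed S"
proof -
  obtain s B where s: "s \<in> S" and B: "\<And>p q. dominates T B p q \<Longrightarrow> p * s + q * x \<in> S"
    using assms(2) unfolding absorbed_def by blast
  obtain s' B' where s': "s' \<in> S" and B': "\<And>p q. dominates T B' p q \<Longrightarrow> p * s' + q * y \<in> S"
    using assms(3) unfolding absorbed_def by blast
  have "p * (s + s') + q * (x + y) \<in> S" if "dominates T (max B B') p q" for p q
  proof -
    have "p * s + q * x \<in> S" and "p * s' + q * y \<in> S"
      using that by (auto intro!: B B' elim: dominates_mono[rotated])
    then have "(p * s + q * x) + (p * s' + q * y) \<in> S"
      by (rule is_T_moduleD(2)[OF S])
    then show ?thesis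
      by (simp add: algebra_simps)
  qed
  moreover have "s + s' \<in> S"
    using is_T_moduleD(2)[OF S s s'] .
  ultimately show ?thesis
    unfolding absorbed_def by blast
qed

lemma absorbed_mult:
  assumes "x \<in> absorbed S"
  shows "a * x \<in> absorbed S"
proof -
  obtain s B where s: "s \<in> S" and B: "\<And>p q. dominates T B p q \<Longrightarrow> p * s + q * x \<in> S"
    using assms unfolding absorbed_def by blast
  obtain N where N: "of_nat N + a \<in> T" "of_nat N - a \<in> T"
    using of_nat_bounds by blast
  have "p * s + q * (a * x) \<in> S" if dom: "dominates T (B * N) p q" for p q
  proof -
    have "real B * \<bar>\<phi> (q * a)\<bar> < \<phi> p" if \<phi>: "\<phi> \<in> positive_homs T" for \<phi>
    proof -
      interpret h: real_ring_hom \<phi>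
        using \<phi> by (rule positive_homsD)
      have "real B * \<bar>\<phi> (q * a)\<bar> = real B * \<bar>\<phi> q\<bar> * \<bar>\<phi> a\<bar>"
        by (simp add: h.mult abs_mult)
      also have "\<dots> \<le> real B * \<bar>\<phi> q\<bar> * real N"
        using positive_hom_abs_le[OF \<phi> N] by (simp add: mult_left_mono)
      also have "\<dots> < \<phi> p"
        using dom \<phi> unfolding dominates_def by (simp add: algebra_simps)
      finally show ?thesis .
    qed
    then have "p * s + (q * a) * x \<in> S"
      by (intro B) (simp add: dominates_def)
    then show ?thesis
      by (simp add: mult.assoc)
  qed
  then show ?thesis
    unfolding absorbed_def using s by blast
qed

lemma one_mem_if_not_subset_maximal_ideal:
  assumes S: "is_T_module T S"
    and nonneg: "\<forall>s\<in>S. \<forall>\<phi>\<in>positive_homs T. 0 \<le> \<phi> s"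
    and not_subset: "\<forall>M. maximal_ideal M \<longrightarrow> \<not> S \<subseteq> M"
  shows "1 \<in> S"
proof -
  have "0 \<in> absorbed S"
    using subset_absorbed[OF S] is_T_moduleD(1)[OF S] by blast
  then have ideal: "is_ideal (absorbed S)"
    unfolding is_ideal_def using absorbed_add[OF S] absorbed_mult by blast
  have "1 \<in> absorbed S"
  proof (rule ccontr)
    assume "1 \<notin> absorbed S"
    then obtain M where "maximal_ideal M" and "absorbed S \<subseteq> M"
      using exists_maximal_ideal_superset[OF ideal] by blast
    then show False
      using not_subset subset_absorbed[OF S] by blast
  qed
  then obtain s B where "s \<in> S" and B: "\<And>p q. dominates T B p q \<Longrightarrow> p * s + q * 1 \<in> S"
    unfolding absorbed_def by blast
  obtain p q where "p * s + q = 1" and "dominates T B p q"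
    using exists_dominant_combination nonneg \<open>s \<in> S\<close> by blast
  then show ?thesis
    using B[where p = p and q = q] by simp
qed

end

theorem theorem4p2:
  fixes T :: "'a::comm_ring_1 set" and f :: 'a
  assumes "is_semiring T"
    and "archimedean T"
    and "\<exists>n::int. n > 1 \<and> (\<exists>u\<in>T. of_int n * u = 1)"
    and "\<forall>M. maximal_ideal M \<longrightarrow>
           (\<exists>s. s \<notin> M \<and> (\<forall>\<alpha>\<in>XT T. nonneg_at \<alpha> s) \<and> s * f \<in> T)"
  shows "f \<in> T"
proof -
  obtain n :: int and u where n: "n > 1" and u: "u \<in> T" and "of_int n * u = 1"
    using assms(3) by blast
  then have "of_nat (nat n) * u = 1"
    by simp
  with n u interpret archimedean_semiring_frac T "nat n" u
    using assms(1,2) by unfold_locales simp_all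
  define S where "S = \<Inter> (XT T) \<inter> {s. s * f \<in> T}"
  have "is_T_module T S"
    unfolding S_def by (intro is_T_module_Int is_T_module_Inter_XT is_T_module_multipliers)
  moreover have "\<forall>s\<in>S. \<forall>\<phi>\<in>positive_homs T. 0 \<le> \<phi> s"
    unfolding S_def using nonneg_set_mem_XT by blast
  moreover have "\<forall>M. maximal_ideal M \<longrightarrow> \<not> S \<subseteq> M"
    using assms(4) unfolding S_def nonneg_at_def by blast
  ultimately have "1 \<in> S"
    by (rule one_mem_if_not_subset_maximal_ideal)
  then show "f \<in> T"
    unfolding S_def by simp
qed

end
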